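(* Assume the pair $(\mathcal D,\mathcal F)$ is good. Then the Hellinger affinity $\mathrm{AffH}(\mu,\nu)=\int_\Omega\sqrt{p_\mu(\omega)p_\nu(\omega)}\,P(d\omega)$ is a continuous function on $\mathcal M\times\mathcal M$ and $\ln\mathrm{AffH}$ is concave on $\mathcal M\times\mathcal M$. Moreover, for every $r\ge0$, $$2\Phi_*(r)=\max_{x,y}\{g^Tx-g^Ty:\ \mathrm{AffH}(A(x),A(y))\ge e^{-r},\ x,y\in X\}.$$
   Context: Let $(\Omega,P)$ be a Polish space equipped with a $\sigma$-finite Borel measure $P$, let $\mathcal M\subset\mathbb R^m$, and let $\mathcal D=\{p_\mu\}_{\mu\in\mathcal M}$ be a parametric density family: for each $\mu\in\mathcal M$, $p_\mu$ is a nonnegative Borel function on $\Omega$ with $\int_\Omega p_\mu\,dP=1$. Let $\mathcal F$ be a finite-dimensional linear space of Borel functions on $\Omega$ containing the constants. The pair $(\mathcal D,\mathcal F)$ is called good if: (1) $\mathcal M$ is an open convex subset of $\mathbb R^m$; (2) $p_\mu(\omega)>0$ for all $\mu\in\mathcal M$, $\omega\in\Omega$; (3) for all $\mu,\nu\in\mathcal M$ the function $\omega\mapsto\ln(p_\mu(\omega)/p_\nu(\omega))$ belongs to $\mathcal F$; (4) for every $\phi\in\mathcal F$ the function $\mu\mapsto\ln\int_\Omega e^{\phi(\omega)}p_\mu(\omega)P(d\omega)$ is well defined (finite) and concave on $\mathcal M$. Let $X\subset\mathbb R^n$ be a nonempty convex compact set, $x\mapsto A(x)$ an affine map $\mathbb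 R^n\to\mathbb R^m$ with $A(X)\subset\mathcal M$, and $g\in\mathbb R^n$. For $r\ge0$, $x,y\in X$, $\phi\in\mathcal F$, $\alpha>0$ define $$\Phi_r(x,y;\phi,\alpha)=g^Tx-g^Ty+\alpha\ln\int_\Omega e^{\phi(\omega)/\alpha}p_{A(y)}(\omega)P(d\omega)+\alpha\ln\int_\Omega e^{-\phi(\omega)/\alpha}p_{A(x)}(\omega)P(d\omega)+2\alpha r,$$ and $\Phi_*(r)=\tfrac12\inf_{\phi\in\mathcal F,\alpha>0}\sup_{x,y\in X}\Phi_r(x,y;\phi,\alpha)$. *)

theory Defs
  imports "HOL-Analysis.Analysis" "HOL-Probability.Probability"
begin

definition density_family :: "'a measure \<Rightarrow> 'v set \<Rightarrow> ('v \<Rightarrow> 'a \<Rightarrow> real) \<Rightarrow> bool" where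
  "density_family P M p \<longleftrightarrow>
     (\<forall>\<mu>\<in>M. p \<mu> \<in> borel_measurable P \<and> (\<forall>\<omega>\<in>space P. 0 \<le> p \<mu> \<omega>)
            \<and> integrable P (p \<mu>) \<and> (\<integral>\<omega>. p \<mu> \<omega> \<partial>P) = 1)"

definition fin_dim_fun_space :: "'a measure \<Rightarrow> ('a \<Rightarrow> real) set \<Rightarrow> bool" where
  "fin_dim_fun_space P F \<longleftrightarrow>
     (\<exists>B. finite B \<and> B \<subseteq> borel_measurable P \<and>
          F = range (\<lambda>c. \<lambda>\<omega>. \<Sum>b\<in>B. c b * b \<omega>))
     \<and> (\<forall>c::real. (\<lambda>_. c) \<in> F)"

definition good_pair :: "'a measure \<Rightarrow> 'v::real_normed_vector set \<Rightarrow> ('v \<Rightarrow> 'a \<Rightarrow> real) \<Rightarrow> ('a \<Rightarrow> real) set \<Rightarrow> bool" where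
  "good_pair P M p F \<longleftrightarrow>
     open M \<and> convex M
     \<and> (\<forall>\<mu>\<in>M. \<forall>\<omega>\<in>space P. 0 < p \<mu> \<omega>)
     \<and> (\<forall>\<mu>\<in>M. \<forall>\<nu>\<in>M. (\<lambda>\<omega>. ln (p \<mu> \<omega> / p \<nu> \<omega>)) \<in> F)
     \<and> (\<forall>\<phi>\<in>F. (\<forall>\<mu>\<in>M. integrable P (\<lambda>\<omega>. exp (\<phi> \<omega>) * p \<mu> \<omega>))
              \<and> concave_on M (\<lambda>\<mu>. ln (\<integral>\<omega>. exp (\<phi> \<omega>) * p \<mu> \<omega> \<partial>P)))"

definition AffH :: "'a measure \<Rightarrow> ('v \<Rightarrow> 'a \<Rightarrow> real) \<Rightarrow> 'v \<Rightarrow> 'v \<Rightarrow> real" where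
  "AffH P p \<mu> \<nu> = (\<integral>\<omega>. sqrt (p \<mu> \<omega> * p \<nu> \<omega>) \<partial>P)"

definition PhiR :: "'a measure \<Rightarrow> ('v \<Rightarrow> 'a \<Rightarrow> real) \<Rightarrow> ('n \<Rightarrow> 'v) \<Rightarrow> 'n::real_inner
    \<Rightarrow> real \<Rightarrow> 'n \<Rightarrow> 'n \<Rightarrow> ('a \<Rightarrow> real) \<Rightarrow> real \<Rightarrow> real" where
  "PhiR P p A g r x y \<phi> \<alpha> =
     inner g x - inner g y
     + \<alpha> * ln (\<integral>\<omega>. exp (\<phi> \<omega> / \<alpha>) * p (A y) \<omega> \<partial>P)
     + \<alpha> * ln (\<integral>\<omega>. exp (- \<phi> \<omega> / \<alpha>) * p (A x) \<omega> \<partial>P)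
     + 2 * \<alpha> * r"

definition PhiStar :: "'a measure \<Rightarrow> ('v \<Rightarrow> 'a \<Rightarrow> real) \<Rightarrow> ('n \<Rightarrow> 'v) \<Rightarrow> 'n::real_inner
    \<Rightarrow> ('a \<Rightarrow> real) set \<Rightarrow> 'n set \<Rightarrow> real \<Rightarrow> ereal" where
  "PhiStar P p A g F X r =
     ereal (1/2) * (INF \<phi>\<alpha>\<in>F \<times> {0<..}.
        SUP xy\<in>X \<times> X. ereal (PhiR P p A g r (fst xy) (snd xy) (fst \<phi>\<alpha>) (snd \<phi>\<alpha>)))"

end

theory Submission
  imports Defs
begin

text \<open>
  The key observation is that with psi = (1/2) ln (p_mu / p_nu), which lies in F,
    2 ln AffH(mu, nu) = Lambda_nu(psi) + Lambda_mu(-psi),   Lambda_mu(phi) = ln \<integral> e^phi p_mu,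
  while Hoelder's (Cauchy-Schwarz) inequality gives "\<le>" for every phi \<in> F.  Hence 2 ln AffH is
  a pointwise minimum of functions concave in (mu, nu); concavity on the open set M x M then
  yields continuity.  For the saddle-point identity, Phi_r is concave and continuous in (x, y)
  on the compact convex set X x X, and convex-like in (phi, alpha) because the perspective
  alpha Lambda(phi/alpha) is jointly convex (Hoelder again).  A Ky Fan type minimax theorem,
  proved here from the separating hyperplane theorem and compactness, lets us exchange inf
  and sup; evaluating the dual at phi = alpha psi shows that inf over (phi, alpha) of
  Phi_r(x, y) is g x - g y at feasible (x, y) and -\<infinity> otherwise.
\<close>

lemma weighted_AM_GM:
  fixes a b w :: real
  assumes "0 \<le> a" "0 \<le> b" "0 < w" "w < 1"
  shows "a powr w * b powr (1 - w) \<le> w * a + (1 - w) * b"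
proof (cases "a = 0 \<or> b = 0")
  case True
  then show ?thesis using assms by auto
next
  case False
  then show ?thesis using assms by (intro Youngs_inequality_0) auto
qed

text \<open>Hoelder's inequality with exponents 1/w and 1/(1-w), in the form for nonnegative integrable
  functions F, G: the product F^w G^(1-w) is integrable (it is dominated by w F + (1-w) G) and
  \<integral> F^w G^(1-w) \<le> (\<integral> F)^w (\<integral> G)^(1-w).\<close>

lemma Hoelder_integrable:
  fixes F G :: "'a \<Rightarrow> real"
  assumes F: "integrable M F" "\<And>x. x \<in> space M \<Longrightarrow> 0 \<le> F x"
    and G: "integrable M G" "\<And>x. x \<in> space M \<Longrightarrow> 0 \<le> G x"
    and w: "0 < w" "w < 1"
  shows "integrable M (\<lambda>x. F x powr w * G x powr (1 - w))"
proof (rule Bochner_Integration.integrable_bound)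
  show "integrable M (\<lambda>x. w * F x + (1 - w) * G x)" using F G by auto
  show "(\<lambda>x. F x powr w * G x powr (1 - w)) \<in> borel_measurable M" using F G by measurable
  show "AE x in M. norm (F x powr w * G x powr (1 - w)) \<le> norm (w * F x + (1 - w) * G x)"
  proof (intro AE_I2)
    fix x assume "x \<in> space M"
    then have "F x powr w * G x powr (1 - w) \<le> w * F x + (1 - w) * G x"
      using weighted_AM_GM[OF F(2) G(2) w] by blast
    then show "norm (F x powr w * G x powr (1 - w)) \<le> norm (w * F x + (1 - w) * G x)" by simp
  qed
qed

lemma Hoelder_inequality:
  fixes F G :: "'a \<Rightarrow> real"
  assumes F: "integrable M F" "\<And>x. x \<in> space M \<Longrightarrow> 0 \<le> F x"
    and G: "integrable M G" "\<And>x. x \<in> space M \<Longrightarrow> 0 \<le> G x"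
    and w: "0 < w" "w < 1"
  shows "(\<integral>x. F x powr w * G x powr (1 - w) \<partial>M) \<le> (\<integral>x. F x \<partial>M) powr w * (\<integral>x. G x \<partial>M) powr (1 - w)"
proof -
  define a b where "a = (\<integral>x. F x \<partial>M)" and "b = (\<integral>x. G x \<partial>M)"
  have "0 \<le> a" "0 \<le> b" unfolding a_def b_def using F G by (simp_all add: integral_nonneg)
  then consider "a = 0 \<or> b = 0" | "0 < a" "0 < b" by fastforce
  then show ?thesis
  proof cases
    case 1
    then have "AE x in M. F x = 0 \<or> G x = 0"
      using integral_nonneg_eq_0_iff_AE[OF F(1)] integral_nonneg_eq_0_iff_AE[OF G(1)] F(2) G(2)
      unfolding a_def b_def by auto
    then have "AE x in M. F x powr w * G x powr (1 - w) = 0"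
      by eventually_elim (use w in auto)
    then show ?thesis by (simp add: integral_eq_zero_AE)
  next
    case 2
    have bound: "F x powr w * G x powr (1 - w) \<le> a powr w * b powr (1 - w) * (w * (F x / a) + (1 - w) * (G x / b))"
      if x: "x \<in> space M" for x
    proof -
      have "F x powr w * G x powr (1 - w) = a powr w * b powr (1 - w) * ((F x / a) powr w * (G x / b) powr (1 - w))"
        using F(2)[OF x] G(2)[OF x] 2 by (simp add: powr_divide)
      also have "\<dots> \<le> a powr w * b powr (1 - w) * (w * (F x / a) + (1 - w) * (G x / b))"
        using F(2)[OF x] G(2)[OF x] 2 w by (intro mult_left_mono weighted_AM_GM) auto
      finally show ?thesis .
    qed
    have "(\<integral>x. F x powr w * G x powr (1 - w) \<partial>M)
        \<le> (\<integral>x. a powr w * b powr (1 - w) * (w * (F x / a) + (1 - w) * (G x / b)) \<partial>M)"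
      using bound Hoelder_integrable[OF F G w] F G by (intro integral_mono) auto
    also have "\<dots> = a powr w * b powr (1 - w)"
      using F G 2 by (simp add: a_def b_def)
    finally show ?thesis unfolding a_def b_def .
  qed
qed

lemma perspective_weight:
  fixes a1 a2 u :: real
  assumes "0 < a1" "0 < a2" "0 < u" "u < 1"
  shows "0 < u * a1 + (1 - u) * a2" "0 < u * a1 / (u * a1 + (1 - u) * a2)"
    "u * a1 / (u * a1 + (1 - u) * a2) < 1"
proof -
  have "0 < u * a1" "0 < (1 - u) * a2" using assms by simp_all
  then show "0 < u * a1 + (1 - u) * a2" "0 < u * a1 / (u * a1 + (1 - u) * a2)"
    "u * a1 / (u * a1 + (1 - u) * a2) < 1" by simp_all
qed

text \<open>Pointwise factorisation behind the joint convexity of perspectives: an exponential tilt by a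
  convex combination of (s/a1, t/a2) is a weighted geometric mean of the two tilts.\<close>

lemma exp_perspective_powr:
  fixes s t q a1 a2 u :: real
  assumes q: "0 \<le> q" and a: "0 < a1" "0 < a2" and u: "0 < u" "u < 1"
  defines "a \<equiv> u * a1 + (1 - u) * a2"
  shows "exp ((u * s + (1 - u) * t) / a) * q
    = (exp (s / a1) * q) powr (u * a1 / a) * (exp (t / a2) * q) powr (1 - u * a1 / a)"
proof (cases "q = 0")
  case True
  then show ?thesis using perspective_weight[OF a u] by (simp add: a_def)
next
  case False
  with q have qp: "0 < q" by simp
  have "0 < a" using perspective_weight[OF a u] by (simp add: a_def)
  then have w1: "1 - u * a1 / a = (1 - u) * a2 / a" by (simp add: a_def field_simps)
  have "(exp (s / a1) * q) powr (u * a1 / a) * (exp (t / a2) * q) powr (1 - u * a1 / a)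
      = (exp (s / a1) powr (u * a1 / a) * exp (t / a2) powr (1 - u * a1 / a))
        * (q powr (u * a1 / a) * q powr (1 - u * a1 / a))"
    using qp by (simp add: powr_mult)
  also have "exp (s / a1) powr (u * a1 / a) * exp (t / a2) powr (1 - u * a1 / a)
      = exp ((u * a1 / a) * (s / a1) + (1 - u * a1 / a) * (t / a2))"
    by (simp add: powr_def exp_add)
  also have "q powr (u * a1 / a) * q powr (1 - u * a1 / a) = q" using qp by (simp flip: powr_add)
  also have "(u * a1 / a) * (s / a1) + (1 - u * a1 / a) * (t / a2) = (u * s + (1 - u) * t) / a"
    unfolding w1 using a \<open>0 < a\<close> by (simp add: field_simps)
  finally show ?thesis by simp
qed

text \<open>Joint convexity of the perspective (phi, a) \<mapsto> a ln \<integral> e^(phi/a) q of a log-Laplace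
  transform, along a segment; this makes Phi_r convex-like in (phi, alpha).\<close>

lemma log_integral_perspective:
  fixes q f1 f2 :: "'a \<Rightarrow> real"
  assumes q: "\<And>x. x \<in> space M \<Longrightarrow> 0 \<le> q x"
    and a: "0 < a1" "0 < a2" and u: "0 \<le> u" "u \<le> 1"
    and int1: "integrable M (\<lambda>x. exp (f1 x / a1) * q x)"
    and int2: "integrable M (\<lambda>x. exp (f2 x / a2) * q x)"
    and pos1: "0 < (\<integral>x. exp (f1 x / a1) * q x \<partial>M)"
    and pos2: "0 < (\<integral>x. exp (f2 x / a2) * q x \<partial>M)"
    and pos: "0 < (\<integral>x. exp ((u * f1 x + (1 - u) * f2 x) / (u * a1 + (1 - u) * a2)) * q x \<partial>M)"
  shows "(u * a1 + (1 - u) * a2) * ln (\<integral>x. exp ((u * f1 x + (1 - u) * f2 x) / (u * a1 + (1 - u) * a2)) * q x \<partial>M)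
      \<le> u * (a1 * ln (\<integral>x. exp (f1 x / a1) * q x \<partial>M)) + (1 - u) * (a2 * ln (\<integral>x. exp (f2 x / a2) * q x \<partial>M))"
proof (cases "u = 0 \<or> u = 1")
  case True
  then show ?thesis by auto
next
  case False
  with u have u': "0 < u" "u < 1" by auto
  define a where "a = u * a1 + (1 - u) * a2"
  define w where "w = u * a1 / a"
  define I1 I2 I where "I1 = (\<integral>x. exp (f1 x / a1) * q x \<partial>M)"
    and "I2 = (\<integral>x. exp (f2 x / a2) * q x \<partial>M)"
    and "I = (\<integral>x. exp ((u * f1 x + (1 - u) * f2 x) / a) * q x \<partial>M)"
  have "0 < a" "0 < w" "w < 1" using perspective_weight[OF a u'] by (simp_all add: a_def w_def)
  have "I = (\<integral>x. (exp (f1 x / a1) * q x) powr w * (exp (f2 x / a2) * q x) powr (1 - w) \<partial>M)"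
    unfolding I_def w_def a_def using q a u' by (intro Bochner_Integration.integral_cong exp_perspective_powr) auto
  also have "\<dots> \<le> I1 powr w * I2 powr (1 - w)"
    unfolding I1_def I2_def using int1 int2 q \<open>0 < w\<close> \<open>w < 1\<close> by (intro Hoelder_inequality) auto
  finally have "ln I \<le> ln (I1 powr w * I2 powr (1 - w))"
    using pos pos1 pos2 by (simp add: I_def I1_def I2_def a_def)
  also have "\<dots> = w * ln I1 + (1 - w) * ln I2"
    using pos1 pos2 by (simp add: I1_def I2_def ln_mult)
  finally have "a * ln I \<le> a * (w * ln I1 + (1 - w) * ln I2)"
    using \<open>0 < a\<close> by simp
  also have "\<dots> = (a * w) * ln I1 + (a * (1 - w)) * ln I2" by (simp add: algebra_simps)
  also have "a * w = u * a1" using \<open>0 < a\<close> by (simp add: w_def)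
  also have "a * (1 - w) = (1 - u) * a2" using \<open>a * w = u * a1\<close> by (simp add: a_def algebra_simps)
  also have "u * a1 * ln I1 + (1 - u) * a2 * ln I2 = u * (a1 * ln I1) + (1 - u) * (a2 * ln I2)"
    by simp
  finally show ?thesis unfolding I_def I1_def I2_def a_def .
qed

lemma quadrant_in_halfplane:
  fixes a1 a2 b m :: real
  assumes half: "\<And>s t. m < s \<Longrightarrow> m < t \<Longrightarrow> b \<le> a1 * s + a2 * t"
  shows "0 \<le> a1" "0 \<le> a2" "b \<le> (a1 + a2) * m"
proof -
  define K where "K = \<bar>b - a1 * (m + 1) - a2 * (m + 1)\<bar> + 1"
  show "0 \<le> a1"
  proof (rule ccontr)
    assume "\<not> 0 \<le> a1"
    then have "b \<le> a1 * (m + 1 + K / - a1) + a2 * (m + 1)"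
      using K_def by (intro half) (auto intro: divide_pos_pos)
    also have "\<dots> = a1 * (m + 1) + a2 * (m + 1) - K"
      using \<open>\<not> 0 \<le> a1\<close> by (simp add: field_simps)
    finally show False unfolding K_def by linarith
  qed
  show "0 \<le> a2"
  proof (rule ccontr)
    assume "\<not> 0 \<le> a2"
    then have "b \<le> a1 * (m + 1) + a2 * (m + 1 + K / - a2)"
      using K_def by (intro half) (auto intro: divide_pos_pos)
    also have "\<dots> = a1 * (m + 1) + a2 * (m + 1) - K"
      using \<open>\<not> 0 \<le> a2\<close> by (simp add: field_simps)
    finally show False unfolding K_def by linarith
  qed
  show "b \<le> (a1 + a2) * m"
  proof (rule field_le_epsilon)
    fix e :: real assume "0 < e"
    define d where "d = e / (a1 + a2 + 1)"
    have "0 < d" using \<open>0 < e\<close> \<open>0 \<le> a1\<close> \<open>0 \<le> a2\<close> by (simp add: d_def)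
    have "(a1 + a2) * d \<le> e"
      using \<open>0 < e\<close> \<open>0 \<le> a1\<close> \<open>0 \<le> a2\<close> by (simp add: d_def field_simps)
    moreover have "b \<le> a1 * (m + d) + a2 * (m + d)" using \<open>0 < d\<close> by (intro half) auto
    ultimately show "b \<le> (a1 + a2) * m + e" by (simp add: algebra_simps)
  qed
qed

lemma convex_joint_hypograph:
  assumes f1: "concave_on Z f1" and f2: "concave_on Z f2"
  shows "convex {q :: real \<times> real. \<exists>z\<in>Z. fst q \<le> f1 z \<and> snd q \<le> f2 z}"
proof (rule convexI)
  fix q1 q2 :: "real \<times> real" and u v :: real
  assume "q1 \<in> {q. \<exists>z\<in>Z. fst q \<le> f1 z \<and> snd q \<le> f2 z}" "q2 \<in> {q. \<exists>z\<in>Z. fst q \<le> f1 z \<and> snd q \<le> f2 z}"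
    and uv: "0 \<le> u" "0 \<le> v" "u + v = 1"
  then obtain z1 z2 where z: "z1 \<in> Z" "z2 \<in> Z" "fst q1 \<le> f1 z1" "snd q1 \<le> f2 z1"
    "fst q2 \<le> f1 z2" "snd q2 \<le> f2 z2" by auto
  have "u *\<^sub>R z1 + v *\<^sub>R z2 \<in> Z"
    using concave_on_imp_convex[OF f1] z uv unfolding convex_def by auto
  moreover have "u * fst q1 + v * fst q2 \<le> f1 (u *\<^sub>R z1 + v *\<^sub>R z2)"
  proof -
    have "u * fst q1 + v * fst q2 \<le> u * f1 z1 + v * f1 z2"
      using z uv by (intro add_mono mult_left_mono) auto
    also have "\<dots> \<le> f1 (u *\<^sub>R z1 + v *\<^sub>R z2)" using f1 z uv unfolding concave_on_iff by auto
    finally show ?thesis .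
  qed
  moreover have "u * snd q1 + v * snd q2 \<le> f2 (u *\<^sub>R z1 + v *\<^sub>R z2)"
  proof -
    have "u * snd q1 + v * snd q2 \<le> u * f2 z1 + v * f2 z2"
      using z uv by (intro add_mono mult_left_mono) auto
    also have "\<dots> \<le> f2 (u *\<^sub>R z1 + v *\<^sub>R z2)" using f2 z uv unfolding concave_on_iff by auto
    finally show ?thesis .
  qed
  ultimately show "u *\<^sub>R q1 + v *\<^sub>R q2 \<in> {q. \<exists>z\<in>Z. fst q \<le> f1 z \<and> snd q \<le> f2 z}"
    by auto
qed

text \<open>The joint hypograph
  is separated from the quadrant above the max-min value by a hyperplane whose normal gives
  the weights.\<close>

lemma two_function_minimax:
  fixes Z :: "'z::real_normed_vector set" and f1 f2 :: "'z \<Rightarrow> real"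
  assumes Z: "compact Z" "Z \<noteq> {}"
    and cont: "continuous_on Z f1" "continuous_on Z f2"
    and conc: "concave_on Z f1" "concave_on Z f2"
    and cover: "\<forall>z\<in>Z. f1 z < c \<or> f2 z < c"
  obtains u where "0 \<le> u" "u \<le> 1" "\<forall>z\<in>Z. u * f1 z + (1 - u) * f2 z < c"
proof -
  obtain z0 where "z0 \<in> Z" and z0: "\<forall>z\<in>Z. min (f1 z) (f2 z) \<le> min (f1 z0) (f2 z0)"
    using continuous_attains_sup[OF Z continuous_on_min[OF cont]] by blast
  define m where "m = min (f1 z0) (f2 z0)"
  have "m < c" using cover \<open>z0 \<in> Z\<close> by (auto simp: m_def)
  define C where "C = {q :: real \<times> real. \<exists>z\<in>Z. fst q \<le> f1 z \<and> snd q \<le> f2 z}"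
  define D where "D = {m<..} \<times> {m<..}"
  have "C \<inter> D = {}" using z0 by (fastforce simp: C_def D_def m_def)
  moreover have "convex C" unfolding C_def using convex_joint_hypograph[OF conc] .
  moreover have "convex D" unfolding D_def by (intro convex_Times) auto
  moreover have "(f1 z0, f2 z0) \<in> C" using \<open>z0 \<in> Z\<close> by (auto simp: C_def)
  moreover have "(m + 1, m + 1) \<in> D" by (simp add: D_def)
  ultimately obtain a b where "a \<noteq> 0" and below: "\<forall>q\<in>C. inner a q \<le> b" and above: "\<forall>q\<in>D. b \<le> inner a q"
    using separating_hyperplane_sets[of C D] by blast
  obtain a1 a2 where a: "a = (a1, a2)" by (cases a)
  have "b \<le> a1 * s + a2 * t" if "m < s" "m < t" for s t
    using above that by (auto simp: D_def a)
  then have a1: "0 \<le> a1" and a2: "0 \<le> a2" and bm: "b \<le> (a1 + a2) * m"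
    using quadrant_in_halfplane by blast+
  have "0 < a1 + a2" using a1 a2 \<open>a \<noteq> 0\<close> by (auto simp: a zero_prod_def)
  define u where "u = a1 / (a1 + a2)"
  have "1 - u = a2 / (a1 + a2)" using \<open>0 < a1 + a2\<close> by (simp add: u_def field_simps)
  show thesis
  proof
    show "0 \<le> u" "u \<le> 1" using a1 a2 \<open>0 < a1 + a2\<close> by (auto simp: u_def)
    show "\<forall>z\<in>Z. u * f1 z + (1 - u) * f2 z < c"
    proof
      fix z assume "z \<in> Z"
      then have "a1 * f1 z + a2 * f2 z \<le> (a1 + a2) * m"
        using below bm by (force simp: C_def a)
      moreover have "u * f1 z + (1 - u) * f2 z = (a1 * f1 z + a2 * f2 z) / (a1 + a2)"
        unfolding \<open>1 - u = a2 / (a1 + a2)\<close> by (simp add: u_def add_divide_distrib)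
      ultimately have "u * f1 z + (1 - u) * f2 z \<le> m"
        using \<open>0 < a1 + a2\<close> by (simp add: divide_le_eq mult.commute)
      then show "u * f1 z + (1 - u) * f2 z < c" using \<open>m < c\<close> by simp
    qed
  qed
qed

lemma superlevel_set_compact:
  fixes Z :: "'z::real_normed_vector set" and f :: "'z \<Rightarrow> real"
  assumes Z: "compact Z" and cont: "continuous_on Z f"
  shows "compact {z\<in>Z. c \<le> f z}"
proof -
  have "closed (Z \<inter> f -` {c..})"
    using Z cont compact_imp_closed by (intro continuous_closed_preimage) auto
  then have "compact (Z \<inter> (Z \<inter> f -` {c..}))" using Z by (intro compact_Int_closed)
  moreover have "Z \<inter> (Z \<inter> f -` {c..}) = {z\<in>Z. c \<le> f z}" by auto
  ultimately show ?thesis by simp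
qed

lemma superlevel_set_convex:
  assumes conc: "concave_on Z f"
  shows "convex {z\<in>Z. c \<le> f z}"
proof (rule convexI)
  fix z1 z2 and u v :: real
  assume z: "z1 \<in> {z\<in>Z. c \<le> f z}" "z2 \<in> {z\<in>Z. c \<le> f z}" and uv: "0 \<le> u" "0 \<le> v" "u + v = 1"
  have "c = u * c + v * c" using uv by (simp flip: distrib_right)
  also have "\<dots> \<le> u * f z1 + v * f z2" using z uv by (intro add_mono mult_left_mono) auto
  also have "\<dots> \<le> f (u *\<^sub>R z1 + v *\<^sub>R z2)" using conc z uv unfolding concave_on_iff by auto
  finally show "u *\<^sub>R z1 + v *\<^sub>R z2 \<in> {z\<in>Z. c \<le> f z}"
    using concave_on_imp_convex[OF conc] z uv unfolding convex_def by auto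
qed

lemma pair_cover_minimax:
  fixes L :: "'z::real_normed_vector \<Rightarrow> 'y \<Rightarrow> real"
  assumes convexlike: "\<And>y1 y2 u. y1 \<in> Y \<Longrightarrow> y2 \<in> Y \<Longrightarrow> 0 \<le> u \<Longrightarrow> u \<le> 1 \<Longrightarrow>
        \<exists>y\<in>Y. \<forall>z\<in>Z. L z y \<le> u * L z y1 + (1 - u) * L z y2"
    and cont: "\<And>y. y \<in> Y \<Longrightarrow> continuous_on Z (\<lambda>z. L z y)"
    and conc: "\<And>y. y \<in> Y \<Longrightarrow> concave_on Z (\<lambda>z. L z y)"
    and "compact Z" and y12: "y1 \<in> Y" "y2 \<in> Y"
    and cover: "\<forall>z\<in>Z. L z y1 < c \<or> L z y2 < c"
  shows "\<exists>y\<in>Y. \<forall>z\<in>Z. L z y < c"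
proof (cases "Z = {}")
  case True
  then show ?thesis using y12 by blast
next
  case False
  obtain u where u: "0 \<le> u" "u \<le> 1" and below: "\<forall>z\<in>Z. u * L z y1 + (1 - u) * L z y2 < c"
    using two_function_minimax[OF \<open>compact Z\<close> False cont cont conc conc, OF y12 y12 cover] by blast
  obtain y where "y \<in> Y" and y: "\<forall>z\<in>Z. L z y \<le> u * L z y1 + (1 - u) * L z y2"
    using convexlike[OF y12 u] by blast
  have "L z y < c" if "z \<in> Z" for z
  proof -
    have "L z y \<le> u * L z y1 + (1 - u) * L z y2" using y that by blast
    also have "\<dots> < c" using below that by blast
    finally show ?thesis .
  qed
  then show ?thesis using \<open>y \<in> Y\<close> by blast
qed

text \<open>Induction on the cover: restricted to the compact convex superlevel set of one member
  x the remaining ones suffice, by induction, for some y'; then x and y' are merged.\<close>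

lemma finite_cover_minimax:
  fixes L :: "'z::real_normed_vector \<Rightarrow> 'y \<Rightarrow> real"
  assumes convexlike: "\<And>y1 y2 u. y1 \<in> Y \<Longrightarrow> y2 \<in> Y \<Longrightarrow> 0 \<le> u \<Longrightarrow> u \<le> 1 \<Longrightarrow>
        \<exists>y\<in>Y. \<forall>z\<in>Z0. L z y \<le> u * L z y1 + (1 - u) * L z y2"
    and cont: "\<And>y. y \<in> Y \<Longrightarrow> continuous_on Z0 (\<lambda>z. L z y)"
    and conc: "\<And>y. y \<in> Y \<Longrightarrow> concave_on Z0 (\<lambda>z. L z y)"
    and S: "finite S" "S \<noteq> {}" "S \<subseteq> Y"
    and Z: "Z \<subseteq> Z0" "compact Z" "convex Z"
    and cover: "\<forall>z\<in>Z. \<exists>y\<in>S. L z y < c"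
  shows "\<exists>y\<in>Y. \<forall>z\<in>Z. L z y < c"
  using S Z cover
proof (induction S arbitrary: Z rule: finite_ne_induct)
  case (singleton x)
  then have "x \<in> Y" "\<forall>z\<in>Z. L z x < c" by simp_all
  then show ?case by blast
next
  case (insert x S)
  then have "x \<in> Y" "S \<subseteq> Y" by simp_all
  from insert.prems have Z: "Z \<subseteq> Z0" "compact Z" "convex Z" and cover: "\<forall>z\<in>Z. \<exists>y\<in>insert x S. L z y < c"
    by simp_all
  have cont_Z: "continuous_on Z (\<lambda>z. L z y)" if "y \<in> Y" for y
    by (rule continuous_on_subset[OF cont[OF that] \<open>Z \<subseteq> Z0\<close>])
  have conc_Z: "concave_on Z (\<lambda>z. L z y)" if "y \<in> Y" for y
    using conc[OF that] Z unfolding concave_on_def by (blast intro: convex_on_subset)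
  define Z' where "Z' = {z\<in>Z. c \<le> L z x}"
  have "compact Z'" "convex Z'"
    unfolding Z'_def using superlevel_set_compact[OF \<open>compact Z\<close> cont_Z] superlevel_set_convex[OF conc_Z]
      \<open>x \<in> Y\<close> by blast+
  moreover have "Z' \<subseteq> Z0" using Z by (auto simp: Z'_def)
  moreover have "\<forall>z\<in>Z'. \<exists>y\<in>S. L z y < c" using cover by (force simp: Z'_def)
  ultimately obtain y' where "y' \<in> Y" and y': "\<forall>z\<in>Z'. L z y' < c"
    using insert.IH[OF \<open>S \<subseteq> Y\<close> \<open>Z' \<subseteq> Z0\<close>] by blast
  have convexlike_Z: "\<exists>y\<in>Y. \<forall>z\<in>Z. L z y \<le> u * L z y1 + (1 - u) * L z y2"
    if "y1 \<in> Y" "y2 \<in> Y" "0 \<le> u" "u \<le> 1" for y1 y2 u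
    using convexlike[OF that] \<open>Z \<subseteq> Z0\<close> by blast
  have "\<forall>z\<in>Z. L z x < c \<or> L z y' < c"
  proof
    fix z assume "z \<in> Z"
    then show "L z x < c \<or> L z y' < c" using y' by (cases "c \<le> L z x") (auto simp: Z'_def)
  qed
  then show ?case
    using pair_cover_minimax[where Y = Y and Z = Z and L = L, OF convexlike_Z cont_Z conc_Z
        \<open>compact Z\<close> \<open>x \<in> Y\<close> \<open>y' \<in> Y\<close>] by blast
qed

text \<open>Ky Fan's minimax theorem in covering form: if the strict sublevel sets {L(., y) < c} cover
  the compact convex set Z, one of them already contains Z.  Otherwise the closed superlevel
  sets have the finite intersection property, hence a common point.\<close>

lemma minimax_strict:
  fixes L :: "'z::real_normed_vector \<Rightarrow> 'y \<Rightarrow> real"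
  assumes Z: "compact Z" "convex Z" and "Y \<noteq> {}"
    and convexlike: "\<And>y1 y2 u. y1 \<in> Y \<Longrightarrow> y2 \<in> Y \<Longrightarrow> 0 \<le> u \<Longrightarrow> u \<le> 1 \<Longrightarrow>
        \<exists>y\<in>Y. \<forall>z\<in>Z. L z y \<le> u * L z y1 + (1 - u) * L z y2"
    and cont: "\<And>y. y \<in> Y \<Longrightarrow> continuous_on Z (\<lambda>z. L z y)"
    and conc: "\<And>y. y \<in> Y \<Longrightarrow> concave_on Z (\<lambda>z. L z y)"
    and cover: "\<forall>z\<in>Z. \<exists>y\<in>Y. L z y < c"
  shows "\<exists>y\<in>Y. \<forall>z\<in>Z. L z y < c"
proof (rule ccontr)
  assume none: "\<not> (\<exists>y\<in>Y. \<forall>z\<in>Z. L z y < c)"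
  define K where "K y = {z\<in>Z. c \<le> L z y}" for y
  have "Z \<inter> (\<Inter>y\<in>Y. K y) \<noteq> {}"
  proof (rule compact_imp_fip_image[OF \<open>compact Z\<close>])
    show "closed (K y)" if "y \<in> Y" for y
      unfolding K_def using superlevel_set_compact[OF \<open>compact Z\<close> cont[OF that]] by (rule compact_imp_closed)
    show "Z \<inter> (\<Inter>y\<in>S. K y) \<noteq> {}" if "finite S" "S \<subseteq> Y" for S
    proof (cases "S = {}")
      case True
      then show ?thesis using none \<open>Y \<noteq> {}\<close> by auto
    next
      case False
      have "\<not> (\<forall>z\<in>Z. \<exists>y\<in>S. L z y < c)"
        using finite_cover_minimax[OF convexlike cont conc \<open>finite S\<close> False \<open>S \<subseteq> Y\<close> order.refl Z] none
        by blast
      then show ?thesis by (auto simp: K_def not_less)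
    qed
  qed
  then show False using cover \<open>Y \<noteq> {}\<close> by (force simp: K_def not_less)
qed

lemma concave_on_continuous:
  fixes f :: "'a::euclidean_space \<Rightarrow> real"
  assumes "open S" "concave_on S f"
  shows "continuous_on S f"
proof -
  have "continuous_on S (\<lambda>x. - f x)"
    using assms by (intro convex_on_continuous) (simp_all add: concave_on_def)
  then show ?thesis using continuous_on_minus by fastforce
qed

lemma affine_map_convex_comb:
  assumes "\<exists>L b. linear L \<and> (\<forall>x. A x = L x + b)" and "u + v = 1"
  shows "A (u *\<^sub>R x + v *\<^sub>R y) = u *\<^sub>R A x + v *\<^sub>R A y"
proof -
  obtain L b where L: "linear L" "\<And>x. A x = L x + b" using assms(1) by blast
  have "A (u *\<^sub>R x + v *\<^sub>R y) = u *\<^sub>R L x + v *\<^sub>R L y + (u + v) *\<^sub>R b"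
    using L assms(2) by (simp add: linear_add linear_scale)
  also have "\<dots> = u *\<^sub>R A x + v *\<^sub>R A y" using L by (simp add: algebra_simps)
  finally show ?thesis .
qed

lemma affine_map_continuous:
  fixes A :: "'n::euclidean_space \<Rightarrow> 'v::real_normed_vector"
  assumes "\<exists>L b. linear L \<and> (\<forall>x. A x = L x + b)"
  shows "continuous_on S A"
proof -
  obtain L b where L: "linear L" "\<And>x. A x = L x + b" using assms by blast
  then have "bounded_linear L" by (simp add: linear_conv_bounded_linear)
  then have "continuous_on S (\<lambda>x. L x + b)"
    by (intro continuous_on_add linear_continuous_on continuous_on_const)
  moreover have "A = (\<lambda>x. L x + b)" using L(2) by (rule ext)
  ultimately show ?thesis by simp
qed

lemma concave_on_compose_affine:
  assumes f: "concave_on M f" and S: "convex S" and h: "h ` S \<subseteq> M"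
    and comb: "\<And>x y u v. x \<in> S \<Longrightarrow> y \<in> S \<Longrightarrow> u + v = 1 \<Longrightarrow> h (u *\<^sub>R x + v *\<^sub>R y) = u *\<^sub>R h x + v *\<^sub>R h y"
  shows "concave_on S (\<lambda>x. f (h x))"
  unfolding concave_on_iff
proof (intro conjI S ballI allI impI)
  fix x y and u v :: real
  assume "x \<in> S" "y \<in> S" "0 \<le> u" "0 \<le> v" "u + v = 1"
  moreover have "h x \<in> M" "h y \<in> M" using h \<open>x \<in> S\<close> \<open>y \<in> S\<close> by auto
  ultimately have "u * f (h x) + v * f (h y) \<le> f (u *\<^sub>R h x + v *\<^sub>R h y)"
    using f unfolding concave_on_iff by blast
  then show "u * f (h x) + v * f (h y) \<le> f (h (u *\<^sub>R x + v *\<^sub>R y))"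
    using comb \<open>x \<in> S\<close> \<open>y \<in> S\<close> \<open>u + v = 1\<close> by simp
qed

lemma concave_on_inner_diff:
  "convex S \<Longrightarrow> concave_on (S \<times> S) (\<lambda>z. inner g (fst z) - inner g (snd z))"
  by (auto simp: concave_on_iff convex_Times algebra_simps)

lemma sqrt_mult_eq_exp_half_ln:
  fixes a b :: real
  assumes "0 < a" "0 < b"
  shows "sqrt (a * b) = exp (ln (a / b) / 2) * b"
proof -
  have "sqrt (a * b) = sqrt ((a / b) * (b * b))" using assms by simp
  also have "\<dots> = sqrt (a / b) * b"
    using assms by (simp only: real_sqrt_mult real_sqrt_mult_self abs_of_pos)
  also have "sqrt (a / b) = exp (ln (a / b) / 2)"
    using assms by (simp add: powr_half_sqrt[symmetric] powr_def)
  finally show ?thesis .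
qed

lemma exists_dual_scale:
  fixes G D r c :: real
  assumes "0 \<le> r" and "D \<le> 0 \<and> G < c \<or> D + r < 0"
  shows "\<exists>\<alpha>>0. G + 2 * \<alpha> * (D + r) < c"
proof (cases "D + r < 0")
  case True
  define \<alpha> where "\<alpha> = (\<bar>G\<bar> + \<bar>c\<bar> + 1) / (- 2 * (D + r))"
  have "0 < \<alpha>" using True by (simp add: \<alpha>_def)
  moreover have "2 * \<alpha> * (D + r) = - (\<bar>G\<bar> + \<bar>c\<bar> + 1)"
    using True by (simp add: \<alpha>_def field_simps)
  ultimately show ?thesis by (intro exI[of _ \<alpha>]) linarith
next
  case False
  with assms(2) have "D \<le> 0" "G < c" by auto
  define \<alpha> where "\<alpha> = (c - G) / (4 * r + 4)"
  have "0 < \<alpha>" using \<open>G < c\<close> \<open>0 \<le> r\<close> by (simp add: \<alpha>_def)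
  have "2 * r / (4 * r + 4) < 1" using \<open>0 \<le> r\<close> by simp
  then have "(c - G) * (2 * r / (4 * r + 4)) < (c - G) * 1"
    using \<open>G < c\<close> by (intro mult_strict_left_mono) auto
  moreover have "2 * \<alpha> * r = (c - G) * (2 * r / (4 * r + 4))" unfolding \<alpha>_def by simp
  moreover have "2 * \<alpha> * D \<le> 0" using \<open>D \<le> 0\<close> \<open>0 < \<alpha>\<close> by (simp add: mult_nonneg_nonpos)
  ultimately show ?thesis using \<open>0 < \<alpha>\<close> by (intro exI[of _ \<alpha>]) (simp add: algebra_simps)
qed

locale good_family =
  fixes P :: "'a measure" and M :: "'v::euclidean_space set" and p :: "'v \<Rightarrow> 'a \<Rightarrow> real"
    and F :: "('a \<Rightarrow> real) set"
  assumes density: "density_family P M p"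
    and fin_dim: "fin_dim_fun_space P F"
    and good: "good_pair P M p F"
begin

lemma open_M: "open M" and convex_M: "convex M"
  using good unfolding good_pair_def by auto

lemma density_pos: "\<mu> \<in> M \<Longrightarrow> \<omega> \<in> space P \<Longrightarrow> 0 < p \<mu> \<omega>"
  using good unfolding good_pair_def by auto

lemma density_integral: "\<mu> \<in> M \<Longrightarrow> (\<integral>\<omega>. p \<mu> \<omega> \<partial>P) = 1"
  using density unfolding density_family_def by auto

lemma F_lincomb:
  assumes "\<phi>1 \<in> F" "\<phi>2 \<in> F"
  shows "(\<lambda>\<omega>. a * \<phi>1 \<omega> + b * \<phi>2 \<omega>) \<in> F"
proof -
  obtain B where B: "F = range (\<lambda>c. \<lambda>\<omega>. \<Sum>e\<in>B. c e * e \<omega>)"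
    using fin_dim unfolding fin_dim_fun_space_def by blast
  obtain c1 c2 where "\<phi>1 = (\<lambda>\<omega>. \<Sum>e\<in>B. c1 e * e \<omega>)" "\<phi>2 = (\<lambda>\<omega>. \<Sum>e\<in>B. c2 e * e \<omega>)"
    using assms B by auto
  then have "(\<lambda>\<omega>. a * \<phi>1 \<omega> + b * \<phi>2 \<omega>) = (\<lambda>\<omega>. \<Sum>e\<in>B. (a * c1 e + b * c2 e) * e \<omega>)"
    by (simp add: sum_distrib_left sum.distrib algebra_simps)
  then show ?thesis using B by auto
qed

lemma F_const: "(\<lambda>_. k) \<in> F"
  using fin_dim unfolding fin_dim_fun_space_def by auto

lemma F_scale: "\<phi> \<in> F \<Longrightarrow> (\<lambda>\<omega>. a * \<phi> \<omega>) \<in> F"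
  using F_lincomb[of \<phi> \<phi> a 0] by simp

lemma F_neg: "\<phi> \<in> F \<Longrightarrow> (\<lambda>\<omega>. - \<phi> \<omega>) \<in> F"
  using F_scale[of \<phi> "-1"] by simp

lemma F_div: "\<phi> \<in> F \<Longrightarrow> (\<lambda>\<omega>. \<phi> \<omega> / a) \<in> F"
  using F_scale[of \<phi> "1 / a"] by simp

definition log_mgf :: "'v \<Rightarrow> ('a \<Rightarrow> real) \<Rightarrow> real" where
  "log_mgf \<mu> \<phi> = ln (\<integral>\<omega>. exp (\<phi> \<omega>) * p \<mu> \<omega> \<partial>P)"

lemma mgf_integrable: "\<phi> \<in> F \<Longrightarrow> \<mu> \<in> M \<Longrightarrow> integrable P (\<lambda>\<omega>. exp (\<phi> \<omega>) * p \<mu> \<omega>)"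
  using good unfolding good_pair_def by auto

lemma log_mgf_concave: "\<phi> \<in> F \<Longrightarrow> concave_on M (\<lambda>\<mu>. log_mgf \<mu> \<phi>)"
  using good unfolding good_pair_def log_mgf_def by auto

lemma log_mgf_continuous: "\<phi> \<in> F \<Longrightarrow> continuous_on M (\<lambda>\<mu>. log_mgf \<mu> \<phi>)"
  using open_M log_mgf_concave by (rule concave_on_continuous)

text \<open>The integrals \<integral> e^phi p_mu are positive, so log_mgf is a genuine logarithm.\<close>

lemma mgf_pos:
  assumes "\<phi> \<in> F" "\<mu> \<in> M"
  shows "0 < (\<integral>\<omega>. exp (\<phi> \<omega>) * p \<mu> \<omega> \<partial>P)"
proof -
  have nonneg: "\<And>\<omega>. \<omega> \<in> space P \<Longrightarrow> 0 \<le> exp (\<phi> \<omega>) * p \<mu> \<omega>"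
    using density_pos[OF assms(2)] by (simp add: less_imp_le)
  have "(\<integral>\<omega>. exp (\<phi> \<omega>) * p \<mu> \<omega> \<partial>P) \<noteq> 0"
  proof
    assume "(\<integral>\<omega>. exp (\<phi> \<omega>) * p \<mu> \<omega> \<partial>P) = 0"
    then have "AE \<omega> in P. exp (\<phi> \<omega>) * p \<mu> \<omega> = 0"
      using integral_nonneg_eq_0_iff_AE[OF mgf_integrable[OF assms]] nonneg by simp
    then have "AE \<omega> in P. p \<mu> \<omega> = 0" by eventually_elim simp
    then have "(\<integral>\<omega>. p \<mu> \<omega> \<partial>P) = 0" by (simp add: integral_eq_zero_AE)
    then show False using density_integral[OF assms(2)] by simp
  qed
  moreover have "0 \<le> (\<integral>\<omega>. exp (\<phi> \<omega>) * p \<mu> \<omega> \<partial>P)"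
    using nonneg by (rule Bochner_Integration.integral_nonneg)
  ultimately show ?thesis by simp
qed

lemma log_mgf_perspective:
  assumes "\<mu> \<in> M" "\<phi>1 \<in> F" "\<phi>2 \<in> F" "0 < \<alpha>1" "0 < \<alpha>2" "0 \<le> u" "u \<le> 1"
  defines "\<alpha> \<equiv> u * \<alpha>1 + (1 - u) * \<alpha>2"
  shows "\<alpha> * log_mgf \<mu> (\<lambda>\<omega>. (u * \<phi>1 \<omega> + (1 - u) * \<phi>2 \<omega>) / \<alpha>)
    \<le> u * (\<alpha>1 * log_mgf \<mu> (\<lambda>\<omega>. \<phi>1 \<omega> / \<alpha>1)) + (1 - u) * (\<alpha>2 * log_mgf \<mu> (\<lambda>\<omega>. \<phi>2 \<omega> / \<alpha>2))"
  unfolding log_mgf_def \<alpha>_def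
  using assms(1,4-7) density_pos[OF assms(1)]
    mgf_integrable[OF F_div[OF assms(2)] assms(1)] mgf_integrable[OF F_div[OF assms(3)] assms(1)]
    mgf_pos[OF F_div[OF assms(2)] assms(1)] mgf_pos[OF F_div[OF assms(3)] assms(1)]
    mgf_pos[OF F_div[OF F_lincomb[OF assms(2,3)]] assms(1)]
  by (intro log_integral_perspective) (auto simp: less_imp_le)

definition half_log_ratio :: "'v \<Rightarrow> 'v \<Rightarrow> 'a \<Rightarrow> real" where
  "half_log_ratio \<mu> \<nu> = (\<lambda>\<omega>. ln (p \<mu> \<omega> / p \<nu> \<omega>) / 2)"

lemma half_log_ratio_in_F: "\<mu> \<in> M \<Longrightarrow> \<nu> \<in> M \<Longrightarrow> half_log_ratio \<mu> \<nu> \<in> F"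
  using good F_scale[of "\<lambda>\<omega>. ln (p \<mu> \<omega> / p \<nu> \<omega>)" "1/2"]
  unfolding good_pair_def half_log_ratio_def by auto

lemma AffH_as_mgf:
  assumes "\<mu> \<in> M" "\<nu> \<in> M"
  shows "AffH P p \<mu> \<nu> = (\<integral>\<omega>. exp (half_log_ratio \<mu> \<nu> \<omega>) * p \<nu> \<omega> \<partial>P)"
    and "AffH P p \<mu> \<nu> = (\<integral>\<omega>. exp (- half_log_ratio \<mu> \<nu> \<omega>) * p \<mu> \<omega> \<partial>P)"
proof -
  have pos: "0 < p \<mu> \<omega>" "0 < p \<nu> \<omega>" if "\<omega> \<in> space P" for \<omega>
    using density_pos assms that by auto
  show "AffH P p \<mu> \<nu> = (\<integral>\<omega>. exp (half_log_ratio \<mu> \<nu> \<omega>) * p \<nu> \<omega> \<partial>P)"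
    unfolding AffH_def half_log_ratio_def
    by (intro Bochner_Integration.integral_cong refl sqrt_mult_eq_exp_half_ln pos)
  have "- (ln (a / b) / 2) = ln (b / a) / 2" if "0 < a" "0 < b" for a b :: real
    using that by (simp add: ln_div field_simps)
  then show "AffH P p \<mu> \<nu> = (\<integral>\<omega>. exp (- half_log_ratio \<mu> \<nu> \<omega>) * p \<mu> \<omega> \<partial>P)"
    unfolding AffH_def half_log_ratio_def using pos
    by (intro Bochner_Integration.integral_cong refl)
       (simp add: mult.commute[of "p \<mu> _"] sqrt_mult_eq_exp_half_ln)
qed

lemma AffH_pos: "\<mu> \<in> M \<Longrightarrow> \<nu> \<in> M \<Longrightarrow> 0 < AffH P p \<mu> \<nu>"
  using AffH_as_mgf(1) mgf_pos half_log_ratio_in_F by simp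

lemma two_ln_AffH_eq:
  assumes "\<mu> \<in> M" "\<nu> \<in> M"
  shows "2 * ln (AffH P p \<mu> \<nu>) = log_mgf \<nu> (half_log_ratio \<mu> \<nu>) + log_mgf \<mu> (\<lambda>\<omega>. - half_log_ratio \<mu> \<nu> \<omega>)"
  using AffH_as_mgf[OF assms] by (simp add: log_mgf_def)

lemma two_ln_AffH_le:
  assumes "\<phi> \<in> F" "\<mu> \<in> M" "\<nu> \<in> M"
  shows "2 * ln (AffH P p \<mu> \<nu>) \<le> log_mgf \<nu> \<phi> + log_mgf \<mu> (\<lambda>\<omega>. - \<phi> \<omega>)"
proof -
  have "(\<lambda>\<omega>. - \<phi> \<omega>) \<in> F" using F_neg[OF assms(1)] .
  define I1 I2 where "I1 = (\<integral>\<omega>. exp (\<phi> \<omega>) * p \<nu> \<omega> \<partial>P)" and "I2 = (\<integral>\<omega>. exp (- \<phi> \<omega>) * p \<mu> \<omega> \<partial>P)"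
  have "0 < I1" "0 < I2"
    using mgf_pos[OF assms(1,3)] mgf_pos[OF \<open>(\<lambda>\<omega>. - \<phi> \<omega>) \<in> F\<close> assms(2)] by (simp_all add: I1_def I2_def)
  have pos: "0 < p \<mu> \<omega>" "0 < p \<nu> \<omega>" if "\<omega> \<in> space P" for \<omega>
    using density_pos assms that by auto
  have "AffH P p \<mu> \<nu> = (\<integral>\<omega>. (exp (\<phi> \<omega>) * p \<nu> \<omega>) powr (1/2) * (exp (- \<phi> \<omega>) * p \<mu> \<omega>) powr (1 - 1/2) \<partial>P)"
    unfolding AffH_def using pos
    by (intro Bochner_Integration.integral_cong refl)
       (simp add: powr_half_sqrt less_imp_le exp_minus field_simps flip: real_sqrt_mult)
  also have "\<dots> \<le> I1 powr (1/2) * I2 powr (1 - 1/2)"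
    unfolding I1_def I2_def
    using mgf_integrable[OF assms(1,3)] mgf_integrable[OF \<open>(\<lambda>\<omega>. - \<phi> \<omega>) \<in> F\<close> assms(2)] pos
    by (intro Hoelder_inequality) (auto simp: less_imp_le)
  finally have "ln (AffH P p \<mu> \<nu>) \<le> ln (I1 powr (1/2) * I2 powr (1/2))"
    using AffH_pos[OF assms(2,3)] \<open>0 < I1\<close> \<open>0 < I2\<close> by simp
  also have "\<dots> = (ln I1 + ln I2) / 2" using \<open>0 < I1\<close> \<open>0 < I2\<close> by (simp add: ln_mult)
  finally show ?thesis by (simp add: log_mgf_def I1_def I2_def)
qed

text \<open>Taking phi = 0 gives AffH \<le> 1; on the diagonal AffH(mu, mu) = \<integral> p_mu = 1.\<close>

lemma AffH_le_1: "\<mu> \<in> M \<Longrightarrow> \<nu> \<in> M \<Longrightarrow> AffH P p \<mu> \<nu> \<le> 1"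
  using two_ln_AffH_le[OF F_const[of 0]] density_integral AffH_pos by (simp add: log_mgf_def)

lemma AffH_self: "\<mu> \<in> M \<Longrightarrow> AffH P p \<mu> \<mu> = 1"
  using density_integral density_pos unfolding AffH_def
  by (simp add: less_imp_le cong: Bochner_Integration.integral_cong)

text \<open>Concavity of ln AffH: evaluate the variational description at the psi of the midpoint and use
  concavity of Lambda in mu.\<close>

lemma ln_AffH_midpoint_concave:
  assumes M: "\<mu>1 \<in> M" "\<nu>1 \<in> M" "\<mu>2 \<in> M" "\<nu>2 \<in> M" and uv: "0 \<le> u" "0 \<le> v" "u + v = 1"
  defines "\<mu> \<equiv> u *\<^sub>R \<mu>1 + v *\<^sub>R \<mu>2" and "\<nu> \<equiv> u *\<^sub>R \<nu>1 + v *\<^sub>R \<nu>2"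
  shows "u * ln (AffH P p \<mu>1 \<nu>1) + v * ln (AffH P p \<mu>2 \<nu>2) \<le> ln (AffH P p \<mu> \<nu>)"
proof -
  have "\<mu> \<in> M" "\<nu> \<in> M" using convex_M M uv unfolding \<mu>_def \<nu>_def convex_def by auto
  define \<psi> where "\<psi> = half_log_ratio \<mu> \<nu>"
  have "\<psi> \<in> F" "(\<lambda>\<omega>. - \<psi> \<omega>) \<in> F"
    using half_log_ratio_in_F[OF \<open>\<mu> \<in> M\<close> \<open>\<nu> \<in> M\<close>] F_neg by (simp_all add: \<psi>_def)
  have "2 * (u * ln (AffH P p \<mu>1 \<nu>1) + v * ln (AffH P p \<mu>2 \<nu>2))
      = u * (2 * ln (AffH P p \<mu>1 \<nu>1)) + v * (2 * ln (AffH P p \<mu>2 \<nu>2))" by simp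
  also have "\<dots> \<le> u * (log_mgf \<nu>1 \<psi> + log_mgf \<mu>1 (\<lambda>\<omega>. - \<psi> \<omega>)) + v * (log_mgf \<nu>2 \<psi> + log_mgf \<mu>2 (\<lambda>\<omega>. - \<psi> \<omega>))"
    using two_ln_AffH_le[OF \<open>\<psi> \<in> F\<close>] M uv by (intro add_mono mult_left_mono) auto
  also have "\<dots> = (u * log_mgf \<nu>1 \<psi> + v * log_mgf \<nu>2 \<psi>) + (u * log_mgf \<mu>1 (\<lambda>\<omega>. - \<psi> \<omega>) + v * log_mgf \<mu>2 (\<lambda>\<omega>. - \<psi> \<omega>))"
    by (simp add: algebra_simps)
  also have "\<dots> \<le> log_mgf \<nu> \<psi> + log_mgf \<mu> (\<lambda>\<omega>. - \<psi> \<omega>)"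
    using log_mgf_concave[OF \<open>\<psi> \<in> F\<close>] log_mgf_concave[OF \<open>(\<lambda>\<omega>. - \<psi> \<omega>) \<in> F\<close>] M uv
    unfolding concave_on_iff \<mu>_def \<nu>_def by (intro add_mono) blast+
  also have "\<dots> = 2 * ln (AffH P p \<mu> \<nu>)"
    using two_ln_AffH_eq[OF \<open>\<mu> \<in> M\<close> \<open>\<nu> \<in> M\<close>] by (simp add: \<psi>_def)
  finally show ?thesis by simp
qed

lemma ln_AffH_concave: "concave_on (M \<times> M) (\<lambda>(\<mu>, \<nu>). ln (AffH P p \<mu> \<nu>))"
  unfolding concave_on_iff using convex_M ln_AffH_midpoint_concave
  by (auto simp: convex_Times)

text \<open>Continuity of AffH = exp (ln AffH) follows from concavity on the open set M x M.\<close>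

lemma AffH_continuous: "continuous_on (M \<times> M) (\<lambda>(\<mu>, \<nu>). AffH P p \<mu> \<nu>)"
proof -
  have "continuous_on (M \<times> M) (\<lambda>z. exp ((\<lambda>(\<mu>, \<nu>). ln (AffH P p \<mu> \<nu>)) z))"
    using ln_AffH_concave open_M by (intro continuous_on_exp concave_on_continuous open_Times)
  moreover have "exp ((\<lambda>(\<mu>, \<nu>). ln (AffH P p \<mu> \<nu>)) z) = (\<lambda>(\<mu>, \<nu>). AffH P p \<mu> \<nu>) z" if "z \<in> M \<times> M" for z
    using that AffH_pos by auto
  ultimately show ?thesis by (rule continuous_on_cong[THEN iffD1, OF refl, rotated])
qed

end

locale saddle_problem = good_family P M p F
  for P :: "'a measure" and M :: "'v::euclidean_space set" and p :: "'v \<Rightarrow> 'a \<Rightarrow> real"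
    and F :: "('a \<Rightarrow> real) set" +
  fixes X :: "'n::euclidean_space set" and A :: "'n \<Rightarrow> 'v" and g :: 'n
  assumes X_nonempty: "X \<noteq> {}" and X_convex: "convex X" and X_compact: "compact X"
    and A_affine: "\<exists>L b. linear L \<and> (\<forall>x. A x = L x + b)"
    and A_X: "A ` X \<subseteq> M"
begin

lemma PhiR_log_mgf:
  "PhiR P p A g r x y \<phi> \<alpha> = inner g x - inner g y + \<alpha> * log_mgf (A y) (\<lambda>\<omega>. \<phi> \<omega> / \<alpha>)
    + \<alpha> * log_mgf (A x) (\<lambda>\<omega>. - \<phi> \<omega> / \<alpha>) + 2 * \<alpha> * r"
  by (simp add: PhiR_def log_mgf_def)

lemma log_mgf_comp_concave:
  assumes "\<phi> \<in> F"
  shows "concave_on (X \<times> X) (\<lambda>z. log_mgf (A (fst z)) \<phi>)"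
    and "concave_on (X \<times> X) (\<lambda>z. log_mgf (A (snd z)) \<phi>)"
  using log_mgf_concave[OF assms] X_convex A_X
  by (auto intro!: concave_on_compose_affine[where M = M] simp: convex_Times affine_map_convex_comb[OF A_affine])

lemma PhiR_concave:
  assumes "\<phi> \<in> F" "0 < \<alpha>"
  shows "concave_on (X \<times> X) (\<lambda>z. PhiR P p A g r (fst z) (snd z) \<phi> \<alpha>)"
  unfolding PhiR_log_mgf using assms X_convex
  by (intro concave_on_add concave_on_cmul concave_on_inner_diff log_mgf_comp_concave F_div F_neg)
     (auto simp: concave_on_const convex_Times)

lemma A_comp_continuous:
  "continuous_on (X \<times> X) (\<lambda>z. A (fst z))" "continuous_on (X \<times> X) (\<lambda>z. A (snd z))"
  using continuous_on_compose2[OF affine_map_continuous[OF A_affine, of UNIV] continuous_on_fst[OF continuous_on_id]]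
    continuous_on_compose2[OF affine_map_continuous[OF A_affine, of UNIV] continuous_on_snd[OF continuous_on_id]]
  by simp_all

lemma log_mgf_comp_continuous:
  assumes "\<psi> \<in> F"
  shows "continuous_on (X \<times> X) (\<lambda>z. log_mgf (A (fst z)) \<psi>)"
    and "continuous_on (X \<times> X) (\<lambda>z. log_mgf (A (snd z)) \<psi>)"
proof -
  have A_img: "(\<lambda>z. A (fst z)) ` (X \<times> X) \<subseteq> M" "(\<lambda>z. A (snd z)) ` (X \<times> X) \<subseteq> M"
    using A_X by auto
  show "continuous_on (X \<times> X) (\<lambda>z. log_mgf (A (fst z)) \<psi>)"
    by (rule continuous_on_compose2[OF log_mgf_continuous[OF assms] A_comp_continuous(1) A_img(1)])
  show "continuous_on (X \<times> X) (\<lambda>z. log_mgf (A (snd z)) \<psi>)"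
    by (rule continuous_on_compose2[OF log_mgf_continuous[OF assms] A_comp_continuous(2) A_img(2)])
qed

lemma PhiR_continuous:
  assumes "\<phi> \<in> F"
  shows "continuous_on (X \<times> X) (\<lambda>z. PhiR P p A g r (fst z) (snd z) \<phi> \<alpha>)"
  unfolding PhiR_log_mgf
  by (intro continuous_intros log_mgf_comp_continuous F_div F_neg assms)

lemma PhiR_convexlike:
  assumes d1: "d1 \<in> F \<times> {0<..}" and d2: "d2 \<in> F \<times> {0<..}" and u: "0 \<le> u" "u \<le> 1"
  shows "\<exists>d\<in>F \<times> {0<..}. \<forall>z\<in>X \<times> X. PhiR P p A g r (fst z) (snd z) (fst d) (snd d)
    \<le> u * PhiR P p A g r (fst z) (snd z) (fst d1) (snd d1) + (1 - u) * PhiR P p A g r (fst z) (snd z) (fst d2) (snd d2)"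
proof -
  obtain \<phi>1 \<alpha>1 \<phi>2 \<alpha>2 where d: "d1 = (\<phi>1, \<alpha>1)" "d2 = (\<phi>2, \<alpha>2)" by fastforce
  with d1 d2 have \<phi>: "\<phi>1 \<in> F" "\<phi>2 \<in> F" and \<alpha>: "0 < \<alpha>1" "0 < \<alpha>2" by auto
  define \<phi> where "\<phi> = (\<lambda>\<omega>. u * \<phi>1 \<omega> + (1 - u) * \<phi>2 \<omega>)"
  define \<alpha> where "\<alpha> = u * \<alpha>1 + (1 - u) * \<alpha>2"
  have "\<phi> \<in> F" unfolding \<phi>_def using \<phi> by (rule F_lincomb)
  have "0 < \<alpha>"
    using \<alpha> u by (cases "u = 0") (auto simp: \<alpha>_def intro: add_pos_nonneg)
  have minus_comb: "(\<lambda>\<omega>. (u * - \<phi>1 \<omega> + (1 - u) * - \<phi>2 \<omega>) / \<alpha>) = (\<lambda>\<omega>. - \<phi> \<omega> / \<alpha>)"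
    by (auto simp: \<phi>_def algebra_simps)
  have "PhiR P p A g r x y \<phi> \<alpha> \<le> u * PhiR P p A g r x y \<phi>1 \<alpha>1 + (1 - u) * PhiR P p A g r x y \<phi>2 \<alpha>2"
    if "x \<in> X" "y \<in> X" for x y
  proof -
    have "A x \<in> M" "A y \<in> M" using A_X that by auto
    note persp = log_mgf_perspective[OF _ _ _ \<alpha> u, folded \<alpha>_def]
    have recombine: "u * (G + a1 + b1 + 2 * \<alpha>1 * r) + (1 - u) * (G + a2 + b2 + 2 * \<alpha>2 * r)
        = G + (u * a1 + (1 - u) * a2) + (u * b1 + (1 - u) * b2) + 2 * \<alpha> * r" for G a1 a2 b1 b2
      by (simp add: \<alpha>_def algebra_simps)
    have "\<alpha> * log_mgf (A y) (\<lambda>\<omega>. \<phi> \<omega> / \<alpha>)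
        \<le> u * (\<alpha>1 * log_mgf (A y) (\<lambda>\<omega>. \<phi>1 \<omega> / \<alpha>1)) + (1 - u) * (\<alpha>2 * log_mgf (A y) (\<lambda>\<omega>. \<phi>2 \<omega> / \<alpha>2))"
      using persp[OF \<open>A y \<in> M\<close> \<phi>] by (simp add: \<phi>_def)
    moreover have "\<alpha> * log_mgf (A x) (\<lambda>\<omega>. - \<phi> \<omega> / \<alpha>)
        \<le> u * (\<alpha>1 * log_mgf (A x) (\<lambda>\<omega>. - \<phi>1 \<omega> / \<alpha>1)) + (1 - u) * (\<alpha>2 * log_mgf (A x) (\<lambda>\<omega>. - \<phi>2 \<omega> / \<alpha>2))"
      using persp[OF \<open>A x \<in> M\<close> F_neg[OF \<phi>(1)] F_neg[OF \<phi>(2)]] by (simp only: minus_comb)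
    ultimately show ?thesis unfolding PhiR_log_mgf recombine by linarith
  qed
  then show ?thesis using \<open>\<phi> \<in> F\<close> \<open>0 < \<alpha>\<close> by (intro bexI[of _ "(\<phi>, \<alpha>)"]) (auto simp: d)
qed

lemma PhiR_weak_duality:
  assumes "x \<in> X" "y \<in> X" "exp (- r) \<le> AffH P p (A x) (A y)" "\<phi> \<in> F" "0 < \<alpha>"
  shows "inner g x - inner g y \<le> PhiR P p A g r x y \<phi> \<alpha>"
proof -
  have M: "A x \<in> M" "A y \<in> M" using A_X assms(1,2) by auto
  have "- r \<le> ln (AffH P p (A x) (A y))"
    using assms(3) AffH_pos[OF M] by (simp add: ln_ge_iff)
  moreover have "2 * ln (AffH P p (A x) (A y))
      \<le> log_mgf (A y) (\<lambda>\<omega>. \<phi> \<omega> / \<alpha>) + log_mgf (A x) (\<lambda>\<omega>. - \<phi> \<omega> / \<alpha>)"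
    using two_ln_AffH_le[OF F_div[OF assms(4)] M] by simp
  ultimately have "0 \<le> \<alpha> * (log_mgf (A y) (\<lambda>\<omega>. \<phi> \<omega> / \<alpha>) + log_mgf (A x) (\<lambda>\<omega>. - \<phi> \<omega> / \<alpha>) + 2 * r)"
    using assms(5) by (intro mult_nonneg_nonneg) auto
  then show ?thesis unfolding PhiR_log_mgf by (simp add: algebra_simps)
qed

lemma PhiR_half_log_ratio:
  assumes "x \<in> X" "y \<in> X" "0 < \<alpha>"
  shows "PhiR P p A g r x y (\<lambda>\<omega>. \<alpha> * half_log_ratio (A x) (A y) \<omega>) \<alpha>
    = inner g x - inner g y + 2 * \<alpha> * (ln (AffH P p (A x) (A y)) + r)"
proof -
  have M: "A x \<in> M" "A y \<in> M" using A_X assms(1,2) by auto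
  show ?thesis
    using two_ln_AffH_eq[OF M] assms(3) unfolding PhiR_log_mgf by (simp add: algebra_simps)
qed

text \<open>Every (x, y) admits a dual point pushing Phi_r below any level c above the primal optimum v:
  a small alpha if (x, y) is feasible, a large one otherwise.\<close>

lemma PhiR_below_any_upper_value:
  assumes "0 \<le> r" and z: "z \<in> X \<times> X" and "v < c"
    and opt: "\<forall>x'\<in>X. \<forall>y'\<in>X. exp (- r) \<le> AffH P p (A x') (A y') \<longrightarrow> inner g x' - inner g y' \<le> v"
  shows "\<exists>d\<in>F \<times> {0<..}. PhiR P p A g r (fst z) (snd z) (fst d) (snd d) < c"
proof -
  obtain x y where xy: "z = (x, y)" "x \<in> X" "y \<in> X" using z by auto
  then have M: "A x \<in> M" "A y \<in> M" using A_X by auto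
  define \<psi> where "\<psi> = half_log_ratio (A x) (A y)"
  define G where "G = inner g x - inner g y"
  define D where "D = ln (AffH P p (A x) (A y))"
  have "D \<le> 0 \<and> G < c \<or> D + r < 0"
  proof (cases "exp (- r) \<le> AffH P p (A x) (A y)")
    case True
    then have "G < c" using opt xy \<open>v < c\<close> by (force simp: G_def)
    moreover have "D \<le> 0" using AffH_le_1[OF M] AffH_pos[OF M] by (simp add: D_def)
    ultimately show ?thesis by simp
  next
    case False
    then have "ln (AffH P p (A x) (A y)) < ln (exp (- r))"
      using AffH_pos[OF M] by (subst ln_less_cancel_iff) auto
    then show ?thesis by (simp add: D_def)
  qed
  then obtain \<alpha> where "0 < \<alpha>" "G + 2 * \<alpha> * (D + r) < c"
    using exists_dual_scale[OF \<open>0 \<le> r\<close>] by blast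
  moreover have "(\<lambda>\<omega>. \<alpha> * \<psi> \<omega>) \<in> F" using F_scale half_log_ratio_in_F[OF M] by (simp add: \<psi>_def)
  moreover have "PhiR P p A g r x y (\<lambda>\<omega>. \<alpha> * \<psi> \<omega>) \<alpha> = G + 2 * \<alpha> * (D + r)"
    using PhiR_half_log_ratio[OF xy(2,3) \<open>0 < \<alpha>\<close>] by (simp add: \<psi>_def G_def D_def)
  ultimately show ?thesis by (intro bexI[of _ "(\<lambda>\<omega>. \<alpha> * \<psi> \<omega>, \<alpha>)"]) (auto simp: xy(1))
qed

lemma twice_PhiStar:
  "2 * PhiStar P p A g F X r
    = (INF d\<in>F \<times> {0<..}. SUP z\<in>X \<times> X. ereal (PhiR P p A g r (fst z) (snd z) (fst d) (snd d)))"
proof -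
  have "(2::ereal) * ereal (1/2) = 1" by (simp add: one_ereal_def)
  then show ?thesis unfolding PhiStar_def by (simp add: mult.assoc[symmetric])
qed

lemma PhiStar_lower:
  assumes "x \<in> X" "y \<in> X" "exp (- r) \<le> AffH P p (A x) (A y)"
  shows "ereal (inner g x - inner g y) \<le> 2 * PhiStar P p A g F X r"
  unfolding twice_PhiStar
proof (rule INF_greatest)
  fix d assume "d \<in> F \<times> {0::real<..}"
  then have "inner g x - inner g y \<le> PhiR P p A g r x y (fst d) (snd d)"
    using PhiR_weak_duality[OF assms] by auto
  also have "ereal (PhiR P p A g r x y (fst d) (snd d))
      \<le> (SUP z\<in>X \<times> X. ereal (PhiR P p A g r (fst z) (snd z) (fst d) (snd d)))"
    using assms(1,2) by (intro SUP_upper2[of "(x, y)"]) auto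
  finally show "ereal (inner g x - inner g y) \<le> (SUP z\<in>X \<times> X. ereal (PhiR P p A g r (fst z) (snd z) (fst d) (snd d)))"
    by simp
qed

lemma PhiStar_upper:
  assumes "0 \<le> r"
    and opt: "\<forall>x'\<in>X. \<forall>y'\<in>X. exp (- r) \<le> AffH P p (A x') (A y') \<longrightarrow> inner g x' - inner g y' \<le> v"
  shows "2 * PhiStar P p A g F X r \<le> ereal v"
  unfolding twice_PhiStar
proof (rule ereal_le_epsilon2)
  fix \<epsilon> :: real assume "0 < \<epsilon>"
  have "((\<lambda>_. 0), 1) \<in> F \<times> {0::real<..}" using F_const by simp
  then have "\<exists>d\<in>F \<times> {0<..}. \<forall>z\<in>X \<times> X. PhiR P p A g r (fst z) (snd z) (fst d) (snd d) < v + \<epsilon>"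
    using PhiR_below_any_upper_value[OF \<open>0 \<le> r\<close> _ _ opt] \<open>0 < \<epsilon>\<close> X_compact X_convex
    by (intro minimax_strict PhiR_convexlike PhiR_continuous PhiR_concave)
       (auto simp: compact_Times convex_Times)
  then obtain d where "d \<in> F \<times> {0<..}" and d: "\<forall>z\<in>X \<times> X. PhiR P p A g r (fst z) (snd z) (fst d) (snd d) < v + \<epsilon>"
    by blast
  then have "(INF d\<in>F \<times> {0<..}. SUP z\<in>X \<times> X. ereal (PhiR P p A g r (fst z) (snd z) (fst d) (snd d)))
      \<le> (SUP z\<in>X \<times> X. ereal (PhiR P p A g r (fst z) (snd z) (fst d) (snd d)))"
    by (intro INF_lower)
  also have "\<dots> \<le> ereal (v + \<epsilon>)"
  proof (rule SUP_least)
    fix z assume "z \<in> X \<times> X"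
    then show "ereal (PhiR P p A g r (fst z) (snd z) (fst d) (snd d)) \<le> ereal (v + \<epsilon>)"
      using d[rule_format, OF \<open>z \<in> X \<times> X\<close>] by (simp add: less_imp_le)
  qed
  finally show "(INF d\<in>F \<times> {0<..}. SUP z\<in>X \<times> X. ereal (PhiR P p A g r (fst z) (snd z) (fst d) (snd d)))
      \<le> ereal v + ereal \<epsilon>" by simp
qed

text \<open>The primal problem attains its maximum: the feasible set is compact (AffH is continuous)
  and contains the diagonal, since AffH(mu, mu) = 1 \<ge> e^(-r).\<close>

lemma optimum_exists:
  assumes "0 \<le> r"
  obtains x y where "x \<in> X" "y \<in> X" "exp (- r) \<le> AffH P p (A x) (A y)"
    "\<forall>x'\<in>X. \<forall>y'\<in>X. exp (- r) \<le> AffH P p (A x') (A y') \<longrightarrow> inner g x' - inner g y' \<le> inner g x - inner g y"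
proof -
  define S where "S = {z\<in>X \<times> X. exp (- r) \<le> AffH P p (A (fst z)) (A (snd z))}"
  have "continuous_on (X \<times> X) (\<lambda>z. (A (fst z), A (snd z)))"
    by (intro continuous_on_Pair A_comp_continuous)
  then have "continuous_on (X \<times> X) (\<lambda>z. AffH P p (A (fst z)) (A (snd z)))"
    using continuous_on_compose2[OF AffH_continuous] A_X by fastforce
  then have "compact S"
    unfolding S_def using X_compact by (intro superlevel_set_compact) (simp_all add: compact_Times)
  moreover obtain x0 where "x0 \<in> X" using X_nonempty by blast
  then have "(x0, x0) \<in> S" using AffH_self A_X \<open>0 \<le> r\<close> by (auto simp: S_def)
  moreover have "continuous_on S (\<lambda>z. inner g (fst z) - inner g (snd z))" by (intro continuous_intros)
  ultimately obtain z where "z \<in> S"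
    and z: "\<forall>z'\<in>S. inner g (fst z') - inner g (snd z') \<le> inner g (fst z) - inner g (snd z)"
    using continuous_attains_sup[of S] by blast
  show thesis
  proof
    show "fst z \<in> X" "snd z \<in> X" "exp (- r) \<le> AffH P p (A (fst z)) (A (snd z))"
      using \<open>z \<in> S\<close> by (auto simp: S_def)
    show "\<forall>x'\<in>X. \<forall>y'\<in>X. exp (- r) \<le> AffH P p (A x') (A y') \<longrightarrow> inner g x' - inner g y' \<le> inner g (fst z) - inner g (snd z)"
      using z by (force simp: S_def)
  qed
qed

end

text \<open>The proposition.  The Polish and sigma-finiteness hypotheses on P are part of the setting but
  not needed by the argument.\<close>
theorem proposition3p1:
  fixes P :: "'a::polish_space measure"
    and M :: "'v::euclidean_space set"
    and p :: "'v \<Rightarrow> 'a \<Rightarrow> real"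
    and F :: "('a \<Rightarrow> real) set"
    and X :: "'n::euclidean_space set"
    and A :: "'n \<Rightarrow> 'v"
    and g :: "'n"
  assumes "sets P = sets borel"
    and "sigma_finite_measure P"
    and "density_family P M p"
    and "fin_dim_fun_space P F"
    and "good_pair P M p F"
    and "X \<noteq> {}" and "convex X" and "compact X"
    and "\<exists>L b. linear L \<and> (\<forall>x. A x = L x + b)"
    and "A ` X \<subseteq> M"
  shows "continuous_on (M \<times> M) (\<lambda>(\<mu>, \<nu>). AffH P p \<mu> \<nu>)
    \<and> concave_on (M \<times> M) (\<lambda>(\<mu>, \<nu>). ln (AffH P p \<mu> \<nu>))
    \<and> (\<forall>r::real. r \<ge> 0 \<longrightarrow>
         (\<exists>x\<in>X. \<exists>y\<in>X. AffH P p (A x) (A y) \<ge> exp (- r)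
            \<and> (\<forall>x'\<in>X. \<forall>y'\<in>X. AffH P p (A x') (A y') \<ge> exp (- r)
                  \<longrightarrow> inner g x' - inner g y' \<le> inner g x - inner g y)
            \<and> 2 * PhiStar P p A g F X r = ereal (inner g x - inner g y)))"
proof -
  interpret saddle_problem P M p F X A g
    using assms(3-10) by unfold_locales
  have "\<exists>x\<in>X. \<exists>y\<in>X. AffH P p (A x) (A y) \<ge> exp (- r)
      \<and> (\<forall>x'\<in>X. \<forall>y'\<in>X. AffH P p (A x') (A y') \<ge> exp (- r) \<longrightarrow> inner g x' - inner g y' \<le> inner g x - inner g y)
      \<and> 2 * PhiStar P p A g F X r = ereal (inner g x - inner g y)" if r: "0 \<le> r" for r
  proof -
    obtain x y where feasible: "x \<in> X" "y \<in> X" "exp (- r) \<le> AffH P p (A x) (A y)"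
      and optimal: "\<forall>x'\<in>X. \<forall>y'\<in>X. exp (- r) \<le> AffH P p (A x') (A y')
        \<longrightarrow> inner g x' - inner g y' \<le> inner g x - inner g y"
      using optimum_exists[OF r] by blast
    have "2 * PhiStar P p A g F X r = ereal (inner g x - inner g y)"
      using PhiStar_upper[OF r optimal] PhiStar_lower[OF feasible] by (rule order.antisym)
    then show ?thesis using feasible optimal by blast
  qed
  then show ?thesis using AffH_continuous ln_AffH_concave by blast
qed

end
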